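(* Let $n\ge 2$, $1\leq i\leq n-1$, and let $$k=\begin{cases} n, & \text{if } i=1 \text{ or } i=n-1,\\ \lceil n/i\rceil+1, & \text{if } 1<i\leq n/2,\\ \lceil n/(n-i)\rceil+1, & \text{if } n/2\leq i<n-1.\end{cases}$$ Then there exist $i$-dimensional linear subspaces $H_1,\dots,H_k$ of $\mathbb{R}^n$ such that: if $E\subset S^{n-1}$ is nonempty, closed, and $R_{H_j}E=E$ for $j=1,\dots,k$, then $E=S^{n-1}$. Consequently, for these subspaces, if $F\subset\mathbb{R}^n$ is closed and $R_{H_j}F=F$ for $j=1,\dots,k$, then $F$ is a union of spheres centered at the origin; and if $K$ is a convex body in $\mathbb{R}^n$ with $R_{H_j}K=K$ for $j=1,\dots,k$, then $K$ is a ball centered at the origin.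
   Context: For a linear subspace $H$ of $\mathbb{R}^n$, $R_H$ is the reflection $x\mapsto 2(x|H)-x$, with $x|H$ the orthogonal projection onto $H$. A convex body is a compact convex set with nonempty interior. $S^{n-1}$ is the unit sphere. *)

theory Defs
  imports "HOL-Analysis.Analysis"
begin

definition orth_proj :: "'a::euclidean_space set \<Rightarrow> 'a \<Rightarrow> 'a" where
  "orth_proj H x = (THE p. p \<in> H \<and> (\<forall>h\<in>H. (x - p) \<bullet> h = 0))"

definition refl_sub :: "'a::euclidean_space set \<Rightarrow> 'a \<Rightarrow> 'a" where
  "refl_sub H x = 2 *\<^sub>R orth_proj H x - x"

definition num_refl :: "nat \<Rightarrow> nat \<Rightarrow> nat" where
  "num_refl n i =
     (if i = 1 \<or> i = n - 1 then n
      else if 2 * i \<le> n then nat \<lceil>real n / real i\<rceil> + 1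
      else nat \<lceil>real n / real (n - i)\<rceil> + 1)"

definition convex_body :: "'a::euclidean_space set \<Rightarrow> bool" where
  "convex_body K \<longleftrightarrow> compact K \<and> convex K \<and> interior K \<noteq> {}"

end

theory Submission
  imports Defs
begin

text \<open>
  Let \<open>d = min i (n - i)\<close>. The reflection in \<open>H\<^sup>\<bottom>\<close> is minus the reflection in \<open>H\<close>, so
  products of two reflections do not change when all subspaces are replaced by their orthogonal
  complements. It therefore suffices to find \<open>d\<close>-dimensional subspaces \<open>G\<^sub>0, \<dots>, G\<^sub>m\<close> such that
  a nonempty closed subset of the unit sphere that is invariant under the products \<open>R\<^sub>0 R\<^sub>j\<close> of
  the reflections in \<open>G\<^sub>0\<close> and \<open>G\<^sub>j\<close> is the whole sphere.

  In an orthonormal basis \<open>e\<close>, let \<open>G\<^sub>0\<close> be spanned by the \<open>e l\<close>, \<open>l < d\<close>, and \<open>G\<^sub>j\<close> by the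
  vectors \<open>cos (\<pi> \<theta> l) e l - sin (\<pi> \<theta> l) e l'\<close>, where the partner coordinate \<open>l' \<ge> d\<close> depends
  on \<open>j\<close>. Then \<open>R\<^sub>0 R\<^sub>j\<close> rotates simultaneously by the angles \<open>2 \<pi> \<theta> l\<close> in the coordinate
  planes of \<open>e l\<close> and \<open>e l'\<close>. If \<open>\<theta> 0, \<dots>, \<theta> (d - 1), 1\<close> are linearly independent over the
  integers, Kronecker's theorem shows that a closed set invariant under this rotation is invariant
  under rotations by arbitrary angles in each of these planes separately. The partners are chosen
  so that these planes connect all coordinates, and rotations in the coordinate planes along a
  connected graph move any unit vector to any other one.

  Rescaling shows that an invariant closed set contains, with every point, the whole sphere
  through it; an invariant convex body is then the convex hull of the sphere through a point of
  maximal norm.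
\<close>

definition int_independent :: "(nat \<Rightarrow> real) \<Rightarrow> nat \<Rightarrow> bool" where
  "int_independent \<theta> k \<longleftrightarrow>
     (\<forall>c::nat \<Rightarrow> int. (\<Sum>i\<le>k. of_int (c i) * \<theta> i) = 0 \<longrightarrow> (\<forall>i\<le>k. c i = 0))"

lemma int_independentD:
  "int_independent \<theta> k \<Longrightarrow> (\<Sum>i\<le>k. of_int (c i) * \<theta> i) = 0 \<Longrightarrow> i \<le> k \<Longrightarrow> c i = 0"
  unfolding int_independent_def by blast

lemma countable_int_span_fractions:
  "countable {y::real. \<exists>(c::nat \<Rightarrow> int) (m::int). m \<noteq> 0 \<and> of_int m * y = (\<Sum>i\<le>k. of_int (c i) * \<theta> i)}"
proof (rule countable_subset)
  let ?f = "\<lambda>(m::int, cs::int list). (\<Sum>i\<le>k. of_int (cs ! i) * \<theta> i) / of_int m"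
  show "countable (range ?f)" by simp
  show "{y. \<exists>c m. m \<noteq> 0 \<and> of_int m * y = (\<Sum>i\<le>k. of_int (c i) * \<theta> i)} \<subseteq> range ?f"
  proof clarify
    fix y :: real and c :: "nat \<Rightarrow> int" and m :: int
    assume "m \<noteq> 0" and y: "of_int m * y = (\<Sum>i\<le>k. of_int (c i) * \<theta> i)"
    have "(\<Sum>i\<le>k. of_int (map c [0..<Suc k] ! i) * \<theta> i) = (\<Sum>i\<le>k. of_int (c i) * \<theta> i)"
      by (rule sum.cong) (simp_all only: atMost_iff le_imp_less_Suc nth_map_upt add_0 refl)
    moreover have "y = (\<Sum>i\<le>k. of_int (c i) * \<theta> i) / of_int m"
      using \<open>m \<noteq> 0\<close> y by (simp add: eq_divide_eq mult.commute)
    ultimately have "?f (m, map c [0..<Suc k]) = y" by simp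
    from this[symmetric] show "y \<in> range ?f" by (rule range_eqI)
  qed
qed

lemma exists_int_independent: "\<exists>\<theta>. \<theta> k = 1 \<and> int_independent \<theta> k"
proof (induction k)
  case 0
  show ?case by (auto simp: int_independent_def)
next
  case (Suc k)
  then obtain \<theta> where \<theta>: "\<theta> k = 1" "int_independent \<theta> k" by blast
  let ?B = "{y::real. \<exists>(c::nat \<Rightarrow> int) (m::int). m \<noteq> 0 \<and> of_int m * y = (\<Sum>i\<le>k. of_int (c i) * \<theta> i)}"
  have "?B \<noteq> UNIV" using countable_int_span_fractions[of \<theta> k] uncountable_UNIV_real by auto
  then obtain y where y: "y \<notin> ?B" by blast
  have "int_independent (case_nat y \<theta>) (Suc k)"
    unfolding int_independent_def
  proof (rule allI, rule impI)
    fix c :: "nat \<Rightarrow> int"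
    assume "(\<Sum>i\<le>Suc k. of_int (c i) * case_nat y \<theta> i) = 0"
    then have "of_int (c 0) * y + (\<Sum>i\<le>k. of_int (c (Suc i)) * \<theta> i) = 0"
      unfolding sum.atMost_Suc_shift by simp
    then have sum0: "of_int (c 0) * y = (\<Sum>i\<le>k. of_int (- c (Suc i)) * \<theta> i)"
      by (simp add: sum_negf eq_neg_iff_add_eq_0)
    have "c 0 = 0"
    proof (rule ccontr)
      assume "c 0 \<noteq> 0"
      with sum0 have "y \<in> ?B" by (intro CollectI exI[of _ "\<lambda>i. - c (Suc i)"] exI[of _ "c 0"]) simp
      with y show False ..
    qed
    then have "(\<Sum>i\<le>k. of_int (c (Suc i)) * \<theta> i) = 0" using sum0 by (simp add: sum_negf)
    then have "\<forall>i\<le>k. c (Suc i) = 0" using int_independentD[OF \<theta>(2), of "\<lambda>i. c (Suc i)"] by blast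
    with \<open>c 0 = 0\<close> show "\<forall>i\<le>Suc k. c i = 0" by (metis Suc_le_mono not0_implies_Suc)
  qed
  then show ?case using \<theta>(1) by (intro exI[of _ "case_nat y \<theta>"]) simp
qed

lemma int_independent_imp_inj_on_independent:
  assumes "int_independent \<theta> k"
  shows "inj_on \<theta> {..k}" and "module.independent (\<lambda>r x. of_int r * x) (\<theta> ` {..k})"
proof -
  interpret module "\<lambda>r x. of_int r * (x::real)"
    by (simp add: module.intro distrib_left mult.commute distrib_right)
  show inj: "inj_on \<theta> {..k}"
  proof (rule inj_onI, rule ccontr)
    fix i j assume ij: "i \<in> {..k}" "j \<in> {..k}" "\<theta> i = \<theta> j" "i \<noteq> j"
    define c :: "nat \<Rightarrow> int" where "c = (\<lambda>l. if l = i then 1 else if l = j then -1 else 0)"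
    have "(\<Sum>l\<le>k. of_int (c l) * \<theta> l) = (\<Sum>l\<le>k. (if l = i then \<theta> i else 0) - (if l = j then \<theta> j else 0))"
      by (rule sum.cong) (auto simp: c_def ij(4))
    also have "\<dots> = 0" using ij by (simp add: sum_subtractf)
    finally have "c i = 0" using int_independentD[OF assms] ij(1) by blast
    then show False by (simp add: c_def)
  qed
  show "independent (\<theta> ` {..k})"
  proof
    assume "dependent (\<theta> ` {..k})"
    then obtain u where u: "\<exists>v\<in>\<theta> ` {..k}. u v \<noteq> 0" "(\<Sum>v\<in>\<theta> ` {..k}. of_int (u v) * v) = 0"
      by (auto simp: dependent_finite)
    then have "(\<Sum>i\<le>k. of_int (u (\<theta> i)) * \<theta> i) = 0" by (simp add: sum.reindex[OF inj])
    then have "\<forall>i\<le>k. u (\<theta> i) = 0" using int_independentD[OF assms, of "\<lambda>i. u (\<theta> i)"] by blast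
    then show False using u(1) by auto
  qed
qed

lemma orth_proj_eqI:
  fixes H :: "'a::euclidean_space set"
  assumes "subspace H" "p \<in> H" "\<And>h. h \<in> H \<Longrightarrow> (x - p) \<bullet> h = 0"
  shows "orth_proj H x = p"
  unfolding orth_proj_def
proof (rule the_equality)
  show "p \<in> H \<and> (\<forall>h\<in>H. (x - p) \<bullet> h = 0)" using assms by blast
next
  fix q assume q: "q \<in> H \<and> (\<forall>h\<in>H. (x - q) \<bullet> h = 0)"
  have "p - q \<in> H" using assms q by (simp add: subspace_diff)
  then have "(p - q) \<bullet> (p - q) = (x - q) \<bullet> (p - q) - (x - p) \<bullet> (p - q)"
    by (simp add: algebra_simps)
  also have "\<dots> = 0" using \<open>p - q \<in> H\<close> q assms by simp
  finally show "q = p" by simp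
qed

lemma refl_sub_add_orthogonal_comp:
  fixes H :: "'a::euclidean_space set"
  assumes "subspace H" "y \<in> H" "z \<in> H\<^sup>\<bottom>"
  shows "refl_sub H (y + z) = y - z"
proof -
  have "orth_proj H (y + z) = y"
    using assms by (intro orth_proj_eqI) (auto simp: orthogonal_comp_def orthogonal_def inner_commute)
  then show ?thesis by (simp add: refl_sub_def scaleR_2)
qed

lemma orthogonal_comp_decomposition:
  fixes H :: "'a::euclidean_space set"
  assumes "subspace H"
  obtains y z where "y \<in> H" "z \<in> H\<^sup>\<bottom>" "x = y + z"
  using subspace_sum_orthogonal_comp[OF assms] by (metis UNIV_I set_plus_elim)

lemma refl_sub_scaleR:
  fixes H :: "'a::euclidean_space set"
  assumes "subspace H"
  shows "refl_sub H (c *\<^sub>R x) = c *\<^sub>R refl_sub H x"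
proof -
  obtain y z where yz: "y \<in> H" "z \<in> H\<^sup>\<bottom>" "x = y + z"
    using orthogonal_comp_decomposition[OF assms] .
  have "refl_sub H (c *\<^sub>R y + c *\<^sub>R z) = c *\<^sub>R y - c *\<^sub>R z"
    using yz assms subspace_orthogonal_comp
    by (intro refl_sub_add_orthogonal_comp subspace_scale) auto
  then show ?thesis
    using yz assms by (simp add: refl_sub_add_orthogonal_comp scaleR_add_right scaleR_diff_right)
qed

lemma norm_refl_sub:
  fixes H :: "'a::euclidean_space set"
  assumes "subspace H"
  shows "norm (refl_sub H x) = norm x"
proof -
  obtain y z where yz: "y \<in> H" "z \<in> H\<^sup>\<bottom>" "x = y + z"
    using orthogonal_comp_decomposition[OF assms] .
  then have "y \<bullet> z = 0" by (simp add: orthogonal_comp_def orthogonal_def)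
  then have "(y - z) \<bullet> (y - z) = (y + z) \<bullet> (y + z)"
    by (simp add: algebra_simps inner_commute)
  then show ?thesis using yz assms by (simp add: refl_sub_add_orthogonal_comp norm_eq_sqrt_inner)
qed

lemma refl_sub_orthogonal_comp:
  fixes H :: "'a::euclidean_space set"
  assumes "subspace H"
  shows "refl_sub (H\<^sup>\<bottom>) x = - refl_sub H x"
proof -
  obtain y z where yz: "y \<in> H" "z \<in> H\<^sup>\<bottom>" "x = y + z"
    using orthogonal_comp_decomposition[OF assms] .
  have "refl_sub (H\<^sup>\<bottom>) (z + y) = z - y"
    using yz orthogonal_comp_subset
    by (intro refl_sub_add_orthogonal_comp subspace_orthogonal_comp) auto
  then show ?thesis using yz assms by (simp add: refl_sub_add_orthogonal_comp add.commute)
qed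

lemma refl_sub_orthogonal_comp_comp:
  fixes G H :: "'a::euclidean_space set"
  assumes "subspace G" "subspace H"
  shows "refl_sub (G\<^sup>\<bottom>) (refl_sub (H\<^sup>\<bottom>) x) = refl_sub G (refl_sub H x)"
  using assms by (simp add: refl_sub_orthogonal_comp refl_sub_scaleR[where c = "-1", simplified])

lemma dim_orthogonal_comp:
  fixes H :: "'a::euclidean_space set"
  assumes "subspace H"
  shows "dim (H\<^sup>\<bottom>) = DIM('a) - dim H"
proof -
  have "dim {y. \<forall>x\<in>H. orthogonal x y} + dim H = dim (UNIV :: 'a set)"
    using dim_subspace_orthogonal_to_vectors[of H UNIV] assms by auto
  then show ?thesis by (simp add: orthogonal_comp_def)
qed

definition orthonormal_upto :: "(nat \<Rightarrow> 'a::real_inner) \<Rightarrow> nat \<Rightarrow> bool" where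
  "orthonormal_upto f d \<longleftrightarrow> (\<forall>l<d. \<forall>l'<d. f l \<bullet> f l' = (if l = l' then 1 else 0))"

lemma orth_proj_span_orthonormal:
  fixes f :: "nat \<Rightarrow> 'a::euclidean_space"
  assumes "orthonormal_upto f d"
  shows "orth_proj (span (f ` {..<d})) x = (\<Sum>l<d. (x \<bullet> f l) *\<^sub>R f l)"
proof (rule orth_proj_eqI)
  let ?p = "\<Sum>l<d. (x \<bullet> f l) *\<^sub>R f l"
  show "?p \<in> span (f ` {..<d})"
    by (intro span_sum span_mul span_base) auto
  have "orthogonal (x - ?p) (f m)" if "m < d" for m
  proof -
    have "?p \<bullet> f m = (\<Sum>l<d. if l = m then x \<bullet> f l else 0)"
      unfolding inner_sum_left using assms that by (intro sum.cong) (auto simp: orthonormal_upto_def)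
    then show ?thesis using that by (simp add: orthogonal_def inner_diff_left)
  qed
  then show "(x - ?p) \<bullet> h = 0" if "h \<in> span (f ` {..<d})" for h
    using orthogonal_to_span[OF that] by (auto simp: orthogonal_def)
qed simp

lemma refl_sub_span_orthonormal:
  fixes f :: "nat \<Rightarrow> 'a::euclidean_space"
  assumes "orthonormal_upto f d"
  shows "refl_sub (span (f ` {..<d})) x = 2 *\<^sub>R (\<Sum>l<d. (x \<bullet> f l) *\<^sub>R f l) - x"
  by (simp add: refl_sub_def orth_proj_span_orthonormal[OF assms])

lemma dim_span_orthonormal:
  fixes f :: "nat \<Rightarrow> 'a::euclidean_space"
  assumes "orthonormal_upto f d"
  shows "dim (span (f ` {..<d})) = d"
proof -
  have inj: "inj_on f {..<d}"
  proof (rule inj_onI, rule ccontr)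
    fix l l' assume ll': "l \<in> {..<d}" "l' \<in> {..<d}" "f l = f l'" "l \<noteq> l'"
    have "f l \<bullet> f l = 1" "f l \<bullet> f l' = 0"
      using assms ll'(1,2,4) unfolding orthonormal_upto_def by auto
    with ll'(3) show False by simp
  qed
  have "independent (f ` {..<d})"
  proof (rule pairwise_orthogonal_independent)
    show "pairwise orthogonal (f ` {..<d})"
      using assms by (auto simp: pairwise_def orthonormal_upto_def orthogonal_def)
    show "0 \<notin> f ` {..<d}"
      using assms by (force simp: orthonormal_upto_def)
  qed
  then have "dim (f ` {..<d}) = card (f ` {..<d})" by (rule dim_eq_card_independent)
  then show ?thesis using card_image[OF inj] by simp
qed

text \<open>For orthonormal \<open>u\<close> and \<open>v\<close>, the rotation by \<open>t\<close> in the plane spanned by \<open>u\<close> and \<open>v\<close>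
  (from \<open>u\<close> towards \<open>v\<close>), fixing the orthogonal complement of that plane.\<close>
definition plane_rot :: "'a::real_inner \<Rightarrow> 'a \<Rightarrow> real \<Rightarrow> 'a \<Rightarrow> 'a" where
  "plane_rot u v t x = x + ((cos t - 1) * (x \<bullet> u) - sin t * (x \<bullet> v)) *\<^sub>R u
                         + (sin t * (x \<bullet> u) + (cos t - 1) * (x \<bullet> v)) *\<^sub>R v"

lemma plane_rot_inner_fst:
  "u \<bullet> u = 1 \<Longrightarrow> u \<bullet> v = 0 \<Longrightarrow> plane_rot u v t x \<bullet> u = cos t * (x \<bullet> u) - sin t * (x \<bullet> v)"
  by (simp add: plane_rot_def inner_add_left inner_commute algebra_simps)

lemma plane_rot_inner_snd:
  "v \<bullet> v = 1 \<Longrightarrow> u \<bullet> v = 0 \<Longrightarrow> plane_rot u v t x \<bullet> v = sin t * (x \<bullet> u) + cos t * (x \<bullet> v)"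
  by (simp add: plane_rot_def inner_add_left inner_commute algebra_simps)

lemma plane_rot_inner_orthogonal:
  "u \<bullet> w = 0 \<Longrightarrow> v \<bullet> w = 0 \<Longrightarrow> plane_rot u v t x \<bullet> w = x \<bullet> w"
  by (simp add: plane_rot_def inner_add_left)

lemma plane_rot_0 [simp]: "plane_rot u v 0 x = x"
  by (simp add: plane_rot_def)

lemma plane_rot_swap: "plane_rot v u t = plane_rot u v (- t)"
  by (rule ext) (simp add: plane_rot_def algebra_simps)

lemma plane_rot_periodic: "plane_rot u v (t + 2 * pi * of_int m) x = plane_rot u v t x"
  by (simp add: plane_rot_def cos_add sin_add)

lemma plane_rot_diff_cong:
  "x \<bullet> u = y \<bullet> u \<Longrightarrow> x \<bullet> v = y \<bullet> v \<Longrightarrow> plane_rot u v t x - x = plane_rot u v t y - y"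
  by (simp add: plane_rot_def)

lemma plane_rot_add:
  assumes "u \<bullet> u = 1" "v \<bullet> v = 1" "u \<bullet> v = 0"
  shows "plane_rot u v t (plane_rot u v s x) = plane_rot u v (t + s) x"
proof -
  define p q where "p = x \<bullet> u" and "q = x \<bullet> v"
  have A: "(cos s - 1) * p - sin s * q + ((cos t - 1) * (cos s * p - sin s * q) - sin t * (sin s * p + cos s * q))
      = (cos (t + s) - 1) * p - sin (t + s) * q"
    by (simp add: cos_add sin_add algebra_simps)
  have B: "sin s * p + (cos s - 1) * q + (sin t * (cos s * p - sin s * q) + (cos t - 1) * (sin s * p + cos s * q))
      = sin (t + s) * p + (cos (t + s) - 1) * q"
    by (simp add: cos_add sin_add algebra_simps)
  show ?thesis
    using A B assms
    unfolding plane_rot_def[of u v t] plane_rot_inner_fst[OF assms(1,3)] plane_rot_inner_snd[OF assms(2,3)]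
    by (simp add: plane_rot_def p_def q_def algebra_simps flip: scaleR_add_left)
qed

lemma norm_plane_rot:
  assumes "u \<bullet> u = 1" "v \<bullet> v = 1" "u \<bullet> v = 0"
  shows "norm (plane_rot u v t x) = norm x"
proof -
  define P Q where "P = (cos t - 1) * (x \<bullet> u) - sin t * (x \<bullet> v)"
    and "Q = sin t * (x \<bullet> u) + (cos t - 1) * (x \<bullet> v)"
  have "plane_rot u v t x = x + P *\<^sub>R u + Q *\<^sub>R v"
    by (simp add: plane_rot_def P_def Q_def)
  then have "plane_rot u v t x \<bullet> plane_rot u v t x
      = x \<bullet> x + (2 * P * (x \<bullet> u) + 2 * Q * (x \<bullet> v) + P * P + Q * Q)"
    using assms by (simp add: inner_add_left inner_add_right inner_commute algebra_simps)
  also have "2 * P * (x \<bullet> u) + 2 * Q * (x \<bullet> v) + P * P + Q * Q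
      = ((sin t)\<^sup>2 + (cos t)\<^sup>2 - 1) * ((x \<bullet> u)\<^sup>2 + (x \<bullet> v)\<^sup>2)"
    unfolding P_def Q_def power2_eq_square by algebra
  finally show ?thesis by (simp add: norm_eq_sqrt_inner)
qed

lemma abs_cos_diff_le: "\<bar>cos (s::real) - cos t\<bar> \<le> \<bar>s - t\<bar>"
proof -
  have "\<bar>cos s - cos t\<bar> = 2 * \<bar>sin ((s + t) / 2)\<bar> * \<bar>sin ((t - s) / 2)\<bar>"
    by (simp add: cos_diff_cos abs_mult)
  also have "\<dots> \<le> 2 * 1 * \<bar>(t - s) / 2\<bar>"
    by (intro mult_mono abs_sin_x_le_abs_x) auto
  finally show ?thesis by simp
qed

lemma abs_sin_diff_le: "\<bar>sin (s::real) - sin t\<bar> \<le> \<bar>s - t\<bar>"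
proof -
  have "\<bar>sin s - sin t\<bar> = 2 * \<bar>sin ((s - t) / 2)\<bar> * \<bar>cos ((s + t) / 2)\<bar>"
    by (simp add: sin_diff_sin abs_mult)
  also have "\<dots> \<le> 2 * \<bar>(s - t) / 2\<bar> * 1"
    by (intro mult_mono abs_sin_x_le_abs_x) auto
  finally show ?thesis by simp
qed

lemma norm_plane_rot_diff:
  assumes "norm u = 1" "norm v = 1"
  shows "norm (plane_rot u v t x - plane_rot u v s x) \<le> 4 * \<bar>t - s\<bar> * norm x"
proof -
  define C S where "C = cos t - cos s" and "S = sin t - sin s"
  have xu: "\<bar>x \<bullet> u\<bar> \<le> norm x" and xv: "\<bar>x \<bullet> v\<bar> \<le> norm x"
    using Cauchy_Schwarz_ineq2[of x u] Cauchy_Schwarz_ineq2[of x v] assms by auto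
  have C: "\<bar>C\<bar> \<le> \<bar>t - s\<bar>" and S: "\<bar>S\<bar> \<le> \<bar>t - s\<bar>"
    using abs_cos_diff_le[of t s] abs_sin_diff_le[of t s] by (simp_all add: C_def S_def)
  have prod: "\<bar>c * (x \<bullet> w)\<bar> \<le> \<bar>t - s\<bar> * norm x" if "\<bar>c\<bar> \<le> \<bar>t - s\<bar>" "\<bar>x \<bullet> w\<bar> \<le> norm x" for c w
    unfolding abs_mult using that by (intro mult_mono) auto
  have "plane_rot u v t x - plane_rot u v s x
      = (C * (x \<bullet> u) - S * (x \<bullet> v)) *\<^sub>R u + (S * (x \<bullet> u) + C * (x \<bullet> v)) *\<^sub>R v"
    by (simp add: plane_rot_def C_def S_def algebra_simps)
  also have "norm \<dots> \<le> \<bar>C * (x \<bullet> u) - S * (x \<bullet> v)\<bar> + \<bar>S * (x \<bullet> u) + C * (x \<bullet> v)\<bar>"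
    using norm_triangle_ineq assms by (metis mult.right_neutral norm_scaleR real_norm_def)
  also have "\<dots> \<le> 4 * \<bar>t - s\<bar> * norm x"
    using prod[OF C xu] prod[OF S xv] prod[OF S xu] prod[OF C xv] by linarith
  finally show ?thesis .
qed

definition orthonormal_planes :: "(nat \<Rightarrow> 'a::real_inner) \<Rightarrow> (nat \<Rightarrow> 'a) \<Rightarrow> nat \<Rightarrow> bool" where
  "orthonormal_planes a b d \<longleftrightarrow>
     orthonormal_upto a d \<and> orthonormal_upto b d \<and> (\<forall>l<d. \<forall>l'<d. a l \<bullet> b l' = 0)"

lemma orthonormal_planesD:
  assumes "orthonormal_planes a b d" "l < d" "l' < d"
  shows "a l \<bullet> a l' = (if l = l' then 1 else 0)" "b l \<bullet> b l' = (if l = l' then 1 else 0)"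
    "a l \<bullet> b l' = 0" "b l \<bullet> a l' = 0"
  using assms by (auto simp: orthonormal_planes_def orthonormal_upto_def inner_commute)

text \<open>When the planes spanned by \<open>a l\<close> and \<open>b l\<close>, \<open>l < d\<close>, are mutually orthogonal, this is the
  composition of the commuting rotations \<open>plane_rot (a l) (b l) (t l)\<close>.\<close>
definition multi_rot :: "(nat \<Rightarrow> 'a::real_inner) \<Rightarrow> (nat \<Rightarrow> 'a) \<Rightarrow> nat \<Rightarrow> (nat \<Rightarrow> real) \<Rightarrow> 'a \<Rightarrow> 'a" where
  "multi_rot a b d t x = x + (\<Sum>l<d. plane_rot (a l) (b l) (t l) x - x)"

lemma multi_rot_inner:
  assumes "orthonormal_planes a b d" "m < d" "w = a m \<or> w = b m"
  shows "multi_rot a b d t x \<bullet> w = plane_rot (a m) (b m) (t m) x \<bullet> w"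
proof -
  have "(plane_rot (a l) (b l) (t l) x - x) \<bullet> w = 0" if "l < d" "l \<noteq> m" for l
    using assms that by (auto simp: inner_diff_left plane_rot_inner_orthogonal orthonormal_planesD)
  then have "(\<Sum>l<d. plane_rot (a l) (b l) (t l) x - x) \<bullet> w = (plane_rot (a m) (b m) (t m) x - x) \<bullet> w"
    unfolding inner_sum_left using assms(2) by (subst sum.remove[of _ m]) auto
  then show ?thesis by (simp add: multi_rot_def inner_add_left inner_diff_left)
qed

lemma multi_rot_add:
  assumes "orthonormal_planes a b d"
  shows "multi_rot a b d t (multi_rot a b d s x) = multi_rot a b d (\<lambda>l. t l + s l) x"
proof -
  let ?P = "\<lambda>l r. plane_rot (a l) (b l) r"
  let ?y = "multi_rot a b d s x"
  have "?P l (t l) ?y - ?y = ?P l (t l) (?P l (s l) x) - ?P l (s l) x" if "l < d" for l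
    using assms that by (intro plane_rot_diff_cong multi_rot_inner) auto
  then have "multi_rot a b d t ?y = ?y + (\<Sum>l<d. ?P l (t l) (?P l (s l) x) - ?P l (s l) x)"
    by (simp add: multi_rot_def[of a b d t])
  also have "\<dots> = x + (\<Sum>l<d. ?P l (t l) (?P l (s l) x) - x)"
    by (simp add: multi_rot_def algebra_simps flip: sum.distrib)
  also have "\<dots> = multi_rot a b d (\<lambda>l. t l + s l) x"
    using assms by (simp add: multi_rot_def plane_rot_add orthonormal_planesD)
  finally show ?thesis .
qed

lemma multi_rot_0 [simp]: "multi_rot a b d (\<lambda>_. 0) x = x"
  by (simp add: multi_rot_def)

lemma multi_rot_single:
  assumes "k < d"
  shows "multi_rot a b d (\<lambda>l. if l = k then t else 0) x = plane_rot (a k) (b k) t x"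
proof -
  have "(\<Sum>l<d. plane_rot (a l) (b l) (if l = k then t else 0) x - x)
      = (\<Sum>l<d. if l = k then plane_rot (a k) (b k) t x - x else 0)"
    by (rule sum.cong) auto
  then show ?thesis using assms by (simp add: multi_rot_def)
qed

lemma multi_rot_periodic:
  "multi_rot a b d (\<lambda>l. t l + 2 * pi * of_int (m l)) x = multi_rot a b d t x"
  by (simp add: multi_rot_def plane_rot_periodic)

lemma norm_multi_rot_diff:
  assumes "orthonormal_planes a b d"
  shows "norm (multi_rot a b d t x - multi_rot a b d s x) \<le> 4 * (\<Sum>l<d. \<bar>t l - s l\<bar>) * norm x"
proof -
  have "multi_rot a b d t x - multi_rot a b d s x
      = (\<Sum>l<d. plane_rot (a l) (b l) (t l) x - plane_rot (a l) (b l) (s l) x)"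
    by (simp add: multi_rot_def flip: sum_subtractf)
  also have "norm \<dots> \<le> (\<Sum>l<d. 4 * \<bar>t l - s l\<bar> * norm x)"
    using assms
    by (intro sum_norm_le norm_plane_rot_diff) (auto simp: norm_eq_1 orthonormal_planesD)
  finally show ?thesis by (simp add: sum_distrib_left sum_distrib_right mult.assoc)
qed

lemma orthonormal_upto_twist:
  assumes "orthonormal_planes a b d"
  shows "orthonormal_upto (\<lambda>l. cos (\<alpha> l) *\<^sub>R a l + sin (\<alpha> l) *\<^sub>R b l) d"
  using assms
  by (auto simp: orthonormal_upto_def inner_add_left inner_add_right orthonormal_planesD
      power2_eq_square[symmetric])

lemma plane_rot_double_angle:
  fixes u v :: "'a::real_inner" and \<alpha> :: real
  defines "f \<equiv> cos \<alpha> *\<^sub>R u + sin \<alpha> *\<^sub>R v"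
  shows "plane_rot u v (- (2 * \<alpha>)) x - x
       = (4 * (x \<bullet> f) * cos \<alpha> - 2 * (x \<bullet> u)) *\<^sub>R u - (2 * (x \<bullet> f)) *\<^sub>R f"
proof -
  define p q F where "p = x \<bullet> u" and "q = x \<bullet> v" and "F = x \<bullet> f"
  have F: "F = cos \<alpha> * p + sin \<alpha> * q"
    by (simp add: F_def f_def p_def q_def inner_add_right)
  have A: "(cos (- (2 * \<alpha>)) - 1) * p - sin (- (2 * \<alpha>)) * q = 4 * F * cos \<alpha> - 2 * p - 2 * F * cos \<alpha>"
    unfolding F cos_minus sin_minus cos_double_cos sin_double by (simp add: algebra_simps power2_eq_square)
  have B: "sin (- (2 * \<alpha>)) * p + (cos (- (2 * \<alpha>)) - 1) * q = - (2 * F * sin \<alpha>)"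
    unfolding F cos_minus sin_minus cos_double_sin sin_double by (simp add: algebra_simps power2_eq_square)
  have "plane_rot u v (- (2 * \<alpha>)) x - x
      = ((cos (- (2 * \<alpha>)) - 1) * p - sin (- (2 * \<alpha>)) * q) *\<^sub>R u
        + (sin (- (2 * \<alpha>)) * p + (cos (- (2 * \<alpha>)) - 1) * q) *\<^sub>R v"
    by (simp add: plane_rot_def p_def q_def)
  also have "\<dots> = (4 * F * cos \<alpha> - 2 * p - 2 * F * cos \<alpha>) *\<^sub>R u + (- (2 * F * sin \<alpha>)) *\<^sub>R v"
    by (simp only: A B)
  also have "\<dots> = (4 * F * cos \<alpha> - 2 * p) *\<^sub>R u - (2 * F) *\<^sub>R f"
    unfolding f_def scaleR_add_right scaleR_scaleR scaleR_diff_left scaleR_minus_left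
    by (simp add: algebra_simps)
  finally show ?thesis by (simp add: p_def F_def)
qed

lemma refl_sub_span_twist_comp:
  fixes a b :: "nat \<Rightarrow> 'a::euclidean_space"
  assumes "orthonormal_planes a b d"
  shows "refl_sub (span (a ` {..<d}))
           (refl_sub (span ((\<lambda>l. cos (\<alpha> l) *\<^sub>R a l + sin (\<alpha> l) *\<^sub>R b l) ` {..<d})) x)
       = multi_rot a b d (\<lambda>l. - (2 * \<alpha> l)) x"
proof -
  define f where "f = (\<lambda>l. cos (\<alpha> l) *\<^sub>R a l + sin (\<alpha> l) *\<^sub>R b l)"
  have a: "orthonormal_upto a d" using assms by (simp add: orthonormal_planes_def)
  define y where "y = 2 *\<^sub>R (\<Sum>l<d. (x \<bullet> f l) *\<^sub>R f l) - x"
  have "y \<bullet> a m = 2 * (x \<bullet> f m) * cos (\<alpha> m) - x \<bullet> a m" if "m < d" for m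
  proof -
    have "(\<Sum>l<d. (x \<bullet> f l) *\<^sub>R f l) \<bullet> a m = (\<Sum>l<d. if l = m then (x \<bullet> f l) * cos (\<alpha> l) else 0)"
      unfolding inner_sum_left using assms that
      by (intro sum.cong) (auto simp: f_def inner_add_left orthonormal_planesD)
    then show ?thesis using that by (simp add: y_def inner_diff_left)
  qed
  then have "refl_sub (span (a ` {..<d})) y
      = 2 *\<^sub>R (\<Sum>l<d. (2 * (x \<bullet> f l) * cos (\<alpha> l) - x \<bullet> a l) *\<^sub>R a l) - y"
    by (simp add: refl_sub_span_orthonormal[OF a])
  also have "\<dots> = x + (\<Sum>l<d. (4 * (x \<bullet> f l) * cos (\<alpha> l) - 2 * (x \<bullet> a l)) *\<^sub>R a l - (2 * (x \<bullet> f l)) *\<^sub>R f l)"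
    by (simp add: y_def scaleR_sum_right sum_subtractf sum.distrib algebra_simps)
  also have "\<dots> = multi_rot a b d (\<lambda>l. - (2 * \<alpha> l)) x"
    by (simp add: multi_rot_def f_def plane_rot_double_angle)
  finally show ?thesis
    using orthonormal_upto_twist[OF assms] by (simp add: y_def f_def refl_sub_span_orthonormal)
qed

lemma multi_rot_int_multiple_invariant:
  assumes "orthonormal_planes a b d" "multi_rot a b d \<gamma> ` E = E"
  shows "multi_rot a b d (\<lambda>l. of_int k * \<gamma> l) ` E \<subseteq> E"
proof -
  have nat_multiple: "multi_rot a b d (\<lambda>l. of_nat n * \<sigma> l) ` E \<subseteq> E"
    if \<sigma>: "multi_rot a b d \<sigma> ` E \<subseteq> E" for n \<sigma>
  proof (induction n)
    case (Suc n)
    have "multi_rot a b d (\<lambda>l. of_nat (Suc n) * \<sigma> l) x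
        = multi_rot a b d \<sigma> (multi_rot a b d (\<lambda>l. of_nat n * \<sigma> l) x)" for x
      by (simp add: multi_rot_add[OF assms(1)] algebra_simps)
    then show ?case using Suc \<sigma> by auto
  qed simp
  have "multi_rot a b d (\<lambda>l. - \<gamma> l) ` E \<subseteq> E"
  proof clarify
    fix z assume "z \<in> E"
    then obtain w where "w \<in> E" "z = multi_rot a b d \<gamma> w" using assms(2) by auto
    then show "multi_rot a b d (\<lambda>l. - \<gamma> l) z \<in> E" by (simp add: multi_rot_add[OF assms(1)])
  qed
  then show ?thesis
    using nat_multiple[of \<gamma> "nat k"] nat_multiple[of "\<lambda>l. - \<gamma> l" "nat (- k)"] assms(2)
    by (cases "k \<ge> 0") auto
qed

lemma multi_rot_int_multiple_approx:
  assumes planes: "orthonormal_planes a b d"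
    and \<theta>: "int_independent \<theta> d" "\<theta> d = 1" and "\<epsilon> > 0"
  obtains k :: int
    where "dist (multi_rot a b d (\<lambda>l. of_int k * (2 * pi * \<theta> l)) x) (multi_rot a b d \<beta> x) < \<epsilon>"
proof -
  define D where "D = (real d + 1) * (norm x + 1)"
  have D: "0 < D" "real d * norm x < D"
    unfolding D_def using norm_ge_zero[of x] by (simp_all add: algebra_simps add_pos_nonneg)
  define \<epsilon>' where "\<epsilon>' = \<epsilon> / (8 * pi * D)"
  have "\<epsilon>' > 0" using \<open>\<epsilon> > 0\<close> D(1) by (simp add: \<epsilon>'_def)
  then obtain k m where km: "\<And>l. l < d \<Longrightarrow> \<bar>of_int k * \<theta> l - of_int (m l) - \<beta> l / (2 * pi)\<bar> < \<epsilon>'"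
    using Kronecker_thm_2[OF int_independent_imp_inj_on_independent(2,1)[OF \<theta>(1)] \<theta>(2),
        of _ "\<lambda>l. \<beta> l / (2 * pi)"] by blast
  define t where "t = (\<lambda>l. of_int k * (2 * pi * \<theta> l) - 2 * pi * of_int (m l))"
  have "\<bar>t l - \<beta> l\<bar> \<le> 2 * pi * \<epsilon>'" if "l < d" for l
  proof -
    have "t l - \<beta> l = 2 * pi * (of_int k * \<theta> l - of_int (m l) - \<beta> l / (2 * pi))"
      by (simp add: t_def field_simps)
    then show ?thesis using km[OF that] by (simp add: abs_mult)
  qed
  then have "(\<Sum>l<d. \<bar>t l - \<beta> l\<bar>) \<le> real d * (2 * pi * \<epsilon>')"
    using sum_bounded_above[of "{..<d}" "\<lambda>l. \<bar>t l - \<beta> l\<bar>"] by auto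
  moreover have "dist (multi_rot a b d t x) (multi_rot a b d \<beta> x) \<le> 4 * (\<Sum>l<d. \<bar>t l - \<beta> l\<bar>) * norm x"
    unfolding dist_norm by (rule norm_multi_rot_diff[OF planes])
  ultimately have "dist (multi_rot a b d t x) (multi_rot a b d \<beta> x) \<le> 4 * (real d * (2 * pi * \<epsilon>')) * norm x"
    by (smt (verit) mult_right_mono norm_ge_zero)
  also have "\<dots> = \<epsilon> * (real d * norm x) / D"
    using D(1) by (simp add: \<epsilon>'_def field_simps)
  also have "\<dots> < \<epsilon>"
    using D \<open>\<epsilon> > 0\<close> by (simp add: divide_less_eq mult_less_cancel_left_pos)
  finally show ?thesis
    using that[of k] multi_rot_periodic[of a b d t m x] by (simp add: t_def)
qed

text \<open>By Kronecker's theorem the vectors \<open>(k \<theta> 0, \<dots>, k \<theta> (d - 1))\<close>, \<open>k \<in> \<int>\<close>, are dense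
  modulo \<open>1\<close>; hence the closure of the cyclic group generated by the rotation contains the
  rotations by all angles in the same planes.\<close>
lemma multi_rot_invariant_all_angles:
  assumes planes: "orthonormal_planes a b d" and "closed E"
    and inv: "multi_rot a b d (\<lambda>l. 2 * pi * \<theta> l) ` E = E"
    and \<theta>: "int_independent \<theta> d" "\<theta> d = 1"
  shows "multi_rot a b d \<beta> ` E \<subseteq> E"
proof clarify
  fix x assume "x \<in> E"
  have "\<exists>z\<in>E. dist z (multi_rot a b d \<beta> x) < \<epsilon>" if \<epsilon>: "\<epsilon> > 0" for \<epsilon>
  proof -
    obtain k :: int
      where "dist (multi_rot a b d (\<lambda>l. of_int k * (2 * pi * \<theta> l)) x) (multi_rot a b d \<beta> x) < \<epsilon>"
      using multi_rot_int_multiple_approx[OF planes \<theta> \<epsilon>] .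
    moreover have "multi_rot a b d (\<lambda>l. of_int k * (2 * pi * \<theta> l)) x \<in> E"
      using multi_rot_int_multiple_invariant[OF planes inv] \<open>x \<in> E\<close> by blast
    ultimately show ?thesis by blast
  qed
  then show "multi_rot a b d \<beta> x \<in> E"
    using closed_approachable[OF \<open>closed E\<close>, of "multi_rot a b d \<beta> x"] by blast
qed

definition rot_invariant :: "'a::real_inner set \<Rightarrow> 'a \<Rightarrow> 'a \<Rightarrow> bool" where
  "rot_invariant E u v \<longleftrightarrow> (\<forall>t. plane_rot u v t ` E \<subseteq> E)"

corollary rot_invariant_if_multi_rot_invariant:
  assumes "orthonormal_planes a b d" "closed E"
    and "multi_rot a b d (\<lambda>l. 2 * pi * \<theta> l) ` E = E"
    and "int_independent \<theta> d" "\<theta> d = 1" "l < d"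
  shows "rot_invariant E (a l) (b l)"
  unfolding rot_invariant_def
proof
  fix t
  show "plane_rot (a l) (b l) t ` E \<subseteq> E"
    using multi_rot_invariant_all_angles[OF assms(1-5), of "\<lambda>l'. if l' = l then t else 0"]
    by (simp add: multi_rot_single[OF assms(6)])
qed

lemma rot_invariant_swap: "rot_invariant E u v \<Longrightarrow> rot_invariant E v u"
  unfolding rot_invariant_def plane_rot_swap[of v u] by simp

lemma rot_invariant_iff:
  assumes "u \<bullet> u = 1" "v \<bullet> v = 1" "u \<bullet> v = 0" "rot_invariant E u v"
  shows "plane_rot u v t x \<in> E \<longleftrightarrow> x \<in> E"
proof
  assume "plane_rot u v t x \<in> E"
  then have "plane_rot u v (- t) (plane_rot u v t x) \<in> E"
    using assms(4) by (auto simp: rot_invariant_def)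
  then show "x \<in> E" by (simp add: plane_rot_add[OF assms(1-3)])
qed (use assms(4) in \<open>auto simp: rot_invariant_def\<close>)

lemma exists_angle_sin_cos_cancel: "\<exists>t. sin t * p + cos t * (q::real) = 0"
proof (cases "p = 0")
  case False
  have "sin (- arctan (q / p)) * p + cos (- arctan (q / p)) * q = 0"
    using False by (simp add: sin_arctan cos_arctan field_simps)
  then show ?thesis ..
qed (auto intro: exI[of _ "pi / 2"])

definition coord_sphere :: "'a::euclidean_space set \<Rightarrow> 'a set" where
  "coord_sphere S = {x. norm x = 1 \<and> (\<forall>b\<in>Basis - S. x \<bullet> b = 0)}"

definition coord_saturated :: "'a::euclidean_space set \<Rightarrow> 'a set \<Rightarrow> bool" where
  "coord_saturated E S \<longleftrightarrow> (\<forall>x\<in>coord_sphere S. \<forall>y\<in>coord_sphere S. x \<in> E \<longrightarrow> y \<in> E)"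

lemma coord_sphere_singleton:
  assumes "u \<in> Basis"
  shows "coord_sphere {u} = {u, - u}"
proof
  show "coord_sphere {u} \<subseteq> {u, - u}"
  proof
    fix x assume x: "x \<in> coord_sphere {u}"
    define c where "c = x \<bullet> u"
    have xc: "x = c *\<^sub>R u"
      by (rule euclidean_eqI) (use x assms in \<open>auto simp: c_def coord_sphere_def inner_Basis\<close>)
    then have "\<bar>c\<bar> = 1" using x assms by (simp add: coord_sphere_def)
    then show "x \<in> {u, - u}" using xc by (auto simp: abs_if split: if_splits)
  qed
  show "{u, - u} \<subseteq> coord_sphere {u}"
    using assms by (auto simp: coord_sphere_def inner_Basis)
qed

lemma coord_saturated_singleton:
  assumes "u \<in> Basis" "w \<in> Basis" "w \<noteq> u" "rot_invariant E u w"
  shows "coord_saturated E {u}"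
proof -
  have "plane_rot u w pi x = - x" if "x \<in> {u, - u}" for x
    using that assms by (auto simp: plane_rot_def inner_Basis scaleR_2 algebra_simps)
  then have "- x \<in> E" if "x \<in> {u, - u}" "x \<in> E" for x
    using that assms(4) unfolding rot_invariant_def by (metis image_subset_iff)
  then show ?thesis
    unfolding coord_saturated_def coord_sphere_singleton[OF assms(1)] by fastforce
qed

lemma exists_plane_rot_into_coord_sphere:
  assumes uv: "u \<in> S" "u \<in> Basis" "v \<in> Basis" "v \<notin> S" and x: "x \<in> coord_sphere (insert v S)"
  obtains t where "plane_rot u v t x \<in> coord_sphere S"
proof -
  have o: "u \<bullet> u = 1" "v \<bullet> v = 1" "u \<bullet> v = 0" using uv by (auto simp: inner_Basis)
  obtain t where t: "sin t * (x \<bullet> u) + cos t * (x \<bullet> v) = 0"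
    using exists_angle_sin_cos_cancel by blast
  have "plane_rot u v t x \<bullet> b = 0" if "b \<in> Basis - S" for b
  proof (cases "b = v")
    case True
    then show ?thesis using t plane_rot_inner_snd[OF o(2,3)] by simp
  next
    case False
    then have "plane_rot u v t x \<bullet> b = x \<bullet> b"
      using that uv by (intro plane_rot_inner_orthogonal) (auto simp: inner_Basis)
    with False that x show ?thesis by (simp add: coord_sphere_def)
  qed
  moreover have "norm (plane_rot u v t x) = 1"
    using x norm_plane_rot[OF o] by (simp add: coord_sphere_def)
  ultimately have "plane_rot u v t x \<in> coord_sphere S" by (auto simp: coord_sphere_def)
  then show ?thesis by (rule that)
qed

lemma coord_saturated_insert:
  assumes sat: "coord_saturated E S" and uv: "u \<in> S" "u \<in> Basis" "v \<in> Basis" "v \<notin> S"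
    and inv: "rot_invariant E u v"
  shows "coord_saturated E (insert v S)"
  unfolding coord_saturated_def
proof (intro ballI impI)
  have o: "u \<bullet> u = 1" "v \<bullet> v = 1" "u \<bullet> v = 0" using uv by (auto simp: inner_Basis)
  fix x y assume "x \<in> coord_sphere (insert v S)" "y \<in> coord_sphere (insert v S)" "x \<in> E"
  then obtain t s where ts: "plane_rot u v t x \<in> coord_sphere S" "plane_rot u v s y \<in> coord_sphere S"
    using exists_plane_rot_into_coord_sphere[OF uv] by metis
  have "plane_rot u v t x \<in> E" using \<open>x \<in> E\<close> rot_invariant_iff[OF o inv] by blast
  then have "plane_rot u v s y \<in> E" using sat ts unfolding coord_saturated_def by blast
  then show "y \<in> E" using rot_invariant_iff[OF o inv] by blast
qed

definition rot_edge :: "'a::euclidean_space set \<Rightarrow> 'a \<Rightarrow> 'a \<Rightarrow> bool" where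
  "rot_edge E u v \<longleftrightarrow> u \<in> Basis \<and> v \<in> Basis \<and> u \<noteq> v \<and> rot_invariant E u v"

lemma rtranclp_leaves_set:
  assumes "R\<^sup>*\<^sup>* x y" "x \<in> S" "y \<notin> S"
  obtains u v where "R u v" "u \<in> S" "v \<notin> S"
  using assms by (induction rule: rtranclp_induct) auto

lemma coord_saturated_Basis_if_connected:
  assumes "S \<subseteq> Basis" "b0 \<in> S" "coord_saturated E S"
    and conn: "\<And>b. b \<in> Basis \<Longrightarrow> (rot_edge E)\<^sup>*\<^sup>* b0 b"
  shows "coord_saturated E Basis"
  using assms(1-3)
proof (induction "card (Basis - S)" arbitrary: S rule: less_induct)
  case less
  show ?case
  proof (cases "S = Basis")
    case False
    then obtain b where "b \<in> Basis" "b \<notin> S" using less.prems(1) by blast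
    then obtain u v where uv: "rot_edge E u v" "u \<in> S" "v \<notin> S"
      using rtranclp_leaves_set[OF conn less.prems(2)] by metis
    then have "coord_saturated E (insert v S)"
      by (intro coord_saturated_insert[OF less.prems(3)]) (auto simp: rot_edge_def)
    moreover have "card (Basis - insert v S) < card (Basis - S)"
      using uv by (intro psubset_card_mono) (auto simp: rot_edge_def)
    moreover have "insert v S \<subseteq> Basis" "b0 \<in> insert v S"
      using uv less.prems by (auto simp: rot_edge_def)
    ultimately show ?thesis using less.hyps by blast
  qed (use less.prems in simp)
qed

lemma sphere_eq_if_rot_edges_connected:
  fixes E :: "'a::euclidean_space set"
  assumes E: "E \<subseteq> sphere 0 1" "E \<noteq> {}" and "2 \<le> DIM('a)"
    and b0: "b0 \<in> Basis" and conn: "\<And>b. b \<in> Basis \<Longrightarrow> (rot_edge E)\<^sup>*\<^sup>* b0 b"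
  shows "E = sphere 0 1"
proof -
  have "card (Basis - {b0}) = DIM('a) - 1" using b0 by (simp add: card_Diff_singleton)
  then have "card (Basis - {b0}) \<noteq> 0" using \<open>2 \<le> DIM('a)\<close> by simp
  then obtain b1 where "b1 \<in> Basis - {b0}" by (metis card.empty ex_in_conv)
  then have "b1 \<in> Basis" "b1 \<noteq> b0" by auto
  then obtain w where "rot_edge E b0 w"
    using conn[of b1] by (metis converse_rtranclpE)
  then have "coord_saturated E {b0}"
    by (intro coord_saturated_singleton[of b0 w]) (auto simp: rot_edge_def)
  then have "coord_saturated E Basis"
    using b0 conn by (intro coord_saturated_Basis_if_connected[of "{b0}"]) auto
  moreover have "coord_sphere Basis = sphere 0 (1::real)" by (auto simp: coord_sphere_def)
  ultimately show ?thesis using E unfolding coord_saturated_def by auto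
qed

text \<open>The planes of the construction pair the coordinate \<open>l < d\<close> with \<open>partner n d p j l \<ge> d\<close>.
  The blocks \<open>j = 1, \<dots>, p - 1\<close> of \<open>d\<close> consecutive partners cover \<open>{d..<n}\<close> (the last one
  shifted back to fit), and block \<open>p\<close> is block \<open>1\<close> shifted cyclically by one, which links the
  coordinates \<open>l < d\<close> among themselves.\<close>
definition partner :: "nat \<Rightarrow> nat \<Rightarrow> nat \<Rightarrow> nat \<Rightarrow> nat \<Rightarrow> nat" where
  "partner n d p j l = (if j = p then d + Suc l mod d else d + min ((j - 1) * d) (n - 2 * d) + l)"

lemma partner_bounds:
  assumes "1 \<le> d" "2 * d \<le> n" "l < d"
  shows "d \<le> partner n d p j l" "partner n d p j l < n"
proof -
  have "Suc l mod d < d" using assms(1) by simp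
  then have "d + Suc l mod d < n" using assms(2) by linarith
  then show "d \<le> partner n d p j l" "partner n d p j l < n"
    using assms by (auto simp: partner_def min_def)
qed

lemma inj_on_partner: "inj_on (partner n d p j) {..<d}"
  by (auto simp: inj_on_def partner_def mod_if split: if_splits)

lemma partner_last: "Suc l < d \<Longrightarrow> partner n d p p l = d + Suc l"
  by (simp add: partner_def)

lemma partner_first: "p \<noteq> 1 \<Longrightarrow> partner n d p 1 l = d + l"
  by (simp add: partner_def)

lemma two_le_if_mult_bounds: "0 < d \<Longrightarrow> 2 * d \<le> n \<Longrightarrow> n \<le> p * d \<Longrightarrow> 2 \<le> (p::nat)"
  using le_trans mult_le_cancel2 by blast

lemma partner_surj:
  assumes d: "1 \<le> d" "2 * d \<le> n" and p: "n \<le> p * d" and w: "d \<le> w" "w < n"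
  obtains j l where "1 \<le> j" "j < p" "l < d" "partner n d p j l = w"
proof -
  define q where "q = w - d"
  have p2: "2 \<le> p" using two_le_if_mult_bounds[of d n p] d p by simp
  have room: "n - 2 * d \<le> (p - 2) * d" using p by (simp add: diff_mult_distrib)
  show ?thesis
  proof (cases "q div d * d \<le> n - 2 * d")
    case True
    then have "q div d * d \<le> (p - 2) * d" using room by linarith
    then have "q div d \<le> p - 2" using d by simp
    then have j: "q div d + 1 < p" using p2 by linarith
    then have "partner n d p (q div d + 1) (q mod d) = d + (q div d * d + q mod d)"
      using True by (simp add: partner_def)
    also have "\<dots> = w" using w by (simp add: q_def)
    finally show ?thesis using that[of "q div d + 1" "q mod d"] d j by simp
  next
    case False
    then have "n - 2 * d < q" using div_times_less_eq_dividend[of q d] by linarith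
    have "p - 1 \<noteq> p" using p2 by simp
    then have "partner n d p (p - 1) (q - (n - 2 * d))
        = d + min ((p - 1 - 1) * d) (n - 2 * d) + (q - (n - 2 * d))"
      by (simp add: partner_def)
    also have "\<dots> = w" using room \<open>n - 2 * d < q\<close> w by (simp add: q_def numeral_2_eq_2)
    finally have "partner n d p (p - 1) (q - (n - 2 * d)) = w" .
    moreover have "q - (n - 2 * d) < d" using w d by (simp add: q_def)
    ultimately show ?thesis using that[of "p - 1"] p2 by simp
  qed
qed

lemma partner_connected:
  assumes d: "1 \<le> d" "2 * d \<le> n" and p: "n \<le> p * d"
    and blocks: "\<And>j l. 1 \<le> j \<Longrightarrow> j < p \<Longrightarrow> l < d \<Longrightarrow> R l (partner n d p j l) \<and> R (partner n d p j l) l"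
    and last: "\<And>l. 2 \<le> d \<Longrightarrow> l < d \<Longrightarrow> R l (partner n d p p l)"
    and "w < n"
  shows "R\<^sup>*\<^sup>* 0 w"
proof -
  have "1 < p" using two_le_if_mult_bounds[of d n p] d p by simp
  have first_block: "R\<^sup>*\<^sup>* 0 l" if "l < d" for l
    using that
  proof (induction l)
    case (Suc l)
    then have "R l (d + Suc l)" using last[of l] partner_last[of l d n p] by simp
    moreover have "R (d + Suc l) (Suc l)"
      using blocks[of 1 "Suc l"] partner_first[of p n d "Suc l"] Suc.prems \<open>1 < p\<close> by simp
    moreover have "R\<^sup>*\<^sup>* 0 l" using Suc by simp
    ultimately show ?case by (simp add: rtranclp.rtrancl_into_rtrancl)
  qed simp
  show ?thesis
  proof (cases "w < d")
    case False
    then obtain j l where "1 \<le> j" "j < p" "l < d" "partner n d p j l = w"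
      using partner_surj[OF d p] \<open>w < n\<close> by (metis not_le)
    then show ?thesis using first_block[of l] blocks[of j l] by (auto intro: rtranclp.rtrancl_into_rtrancl)
  qed (rule first_block)
qed

lemma inner_bij_Basis:
  assumes "bij_betw e {..<DIM('a)} (Basis :: 'a::euclidean_space set)" "i < DIM('a)" "i' < DIM('a)"
  shows "e i \<bullet> e i' = (if i = i' then 1 else 0)"
proof -
  have "e i \<in> Basis" "e i' \<in> Basis" "e i = e i' \<longleftrightarrow> i = i'"
    using assms by (auto simp: bij_betw_def inj_on_def)
  then show ?thesis by (auto simp: inner_Basis)
qed

lemma orthonormal_planes_partner:
  assumes e: "bij_betw e {..<DIM('a)} (Basis :: 'a::euclidean_space set)"
    and d: "1 \<le> d" "2 * d \<le> DIM('a)"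
  shows "orthonormal_planes e (e \<circ> partner DIM('a) d p j) d"
  unfolding orthonormal_planes_def orthonormal_upto_def
proof (intro conjI allI impI)
  fix l l' assume l: "l < d" "l' < d"
  note bounds = partner_bounds[OF d l(1), of p j] partner_bounds[OF d l(2), of p j]
  show "e l \<bullet> e l' = (if l = l' then 1 else 0)"
    using inner_bij_Basis[OF e] l d by simp
  show "(e \<circ> partner DIM('a) d p j) l \<bullet> (e \<circ> partner DIM('a) d p j) l' = (if l = l' then 1 else 0)"
    using inner_bij_Basis[OF e] bounds inj_on_partner[of "DIM('a)" d p j] l
    by (auto simp: inj_on_def)
  show "e l \<bullet> (e \<circ> partner DIM('a) d p j) l' = 0"
    using inner_bij_Basis[OF e] bounds l d by simp
qed

definition minimal_on_sphere :: "('a::real_normed_vector \<Rightarrow> 'a) set \<Rightarrow> bool" where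
  "minimal_on_sphere T \<longleftrightarrow>
     (\<forall>E. E \<subseteq> sphere 0 1 \<and> E \<noteq> {} \<and> closed E \<and> (\<forall>f\<in>T. f ` E = E) \<longrightarrow> E = sphere 0 1)"

lemma minimal_on_sphereI:
  assumes "\<And>E. E \<subseteq> sphere 0 1 \<Longrightarrow> E \<noteq> {} \<Longrightarrow> closed E \<Longrightarrow> (\<And>f. f \<in> T \<Longrightarrow> f ` E = E)
      \<Longrightarrow> E = sphere 0 1"
  shows "minimal_on_sphere T"
  using assms by (auto simp: minimal_on_sphere_def)

lemma minimal_on_sphereD:
  assumes "minimal_on_sphere T" "E \<subseteq> sphere 0 1" "E \<noteq> {}" "closed E" "\<And>f. f \<in> T \<Longrightarrow> f ` E = E"
  shows "E = sphere 0 1"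
  using assms by (auto simp: minimal_on_sphere_def)

lemma minimal_on_sphere_if_compositions:
  assumes "minimal_on_sphere T" and "\<And>f. f \<in> T \<Longrightarrow> \<exists>g\<in>T'. \<exists>h\<in>T'. f = g \<circ> h"
  shows "minimal_on_sphere T'"
proof (rule minimal_on_sphereI)
  fix E assume E: "E \<subseteq> sphere 0 1" "E \<noteq> {}" "closed E" and inv: "\<And>f. f \<in> T' \<Longrightarrow> f ` E = E"
  have "f ` E = E" if f: "f \<in> T" for f
  proof -
    obtain g h where gh: "g \<in> T'" "h \<in> T'" "f = g \<circ> h" using assms(2)[OF f] by blast
    have "f ` E = g ` (h ` E)" unfolding gh(3) by (rule image_comp[symmetric])
    then show ?thesis using inv[OF gh(1)] inv[OF gh(2)] by simp
  qed
  then show "E = sphere 0 1" by (rule minimal_on_sphereD[OF assms(1) E])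
qed

lemma image_Int_sphere:
  assumes "\<And>x. norm (f x) = norm x" "f ` F = F"
  shows "f ` (F \<inter> sphere 0 r) = F \<inter> sphere 0 r"
proof
  show "f ` (F \<inter> sphere 0 r) \<subseteq> F \<inter> sphere 0 r"
  proof clarify
    fix x assume "x \<in> F" "x \<in> sphere 0 r"
    from \<open>x \<in> F\<close> have "f x \<in> f ` F" by (rule imageI)
    then show "f x \<in> F \<inter> sphere 0 r" using assms \<open>x \<in> sphere 0 r\<close> by simp
  qed
  show "F \<inter> sphere 0 r \<subseteq> f ` (F \<inter> sphere 0 r)"
  proof
    fix y assume y: "y \<in> F \<inter> sphere 0 r"
    then have "y \<in> f ` F" using assms(2) by simp
    then obtain x where "x \<in> F" "y = f x" by (rule imageE)
    then show "y \<in> f ` (F \<inter> sphere 0 r)" using y assms(1) by (intro image_eqI[of y f x]) auto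
  qed
qed

lemma sphere_subset_if_minimal_on_sphere:
  fixes F :: "'a::real_normed_vector set"
  assumes T: "minimal_on_sphere T" "\<forall>f\<in>T. \<forall>x. norm (f x) = norm x"
      "\<forall>f\<in>T. \<forall>c x. f (c *\<^sub>R x) = c *\<^sub>R f x"
    and F: "closed F" "\<forall>f\<in>T. f ` F = F" and "x \<in> F"
  shows "sphere 0 (norm x) \<subseteq> F"
proof (cases "x = 0")
  case False
  define r where "r = norm x"
  have "r > 0" using False by (simp add: r_def)
  define E where "E = (\<lambda>y. y /\<^sub>R r) ` (F \<inter> sphere 0 r)"
  have "f ` E = E" if "f \<in> T" for f
  proof -
    have "f ` E = (\<lambda>y. y /\<^sub>R r) ` (f ` (F \<inter> sphere 0 r))"
      unfolding E_def image_image using T(3) that by simp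
    moreover have "f ` (F \<inter> sphere 0 r) = F \<inter> sphere 0 r"
      using T(2) F(2) that by (intro image_Int_sphere) auto
    ultimately show ?thesis by (simp add: E_def)
  qed
  moreover have "E \<subseteq> sphere 0 1" "E \<noteq> {}"
    using \<open>r > 0\<close> \<open>x \<in> F\<close> by (auto simp: E_def r_def)
  moreover have "closed E"
    unfolding E_def cball_diff_eq_sphere[symmetric]
    by (intro closed_scaling closed_Int F(1) closed_Diff closed_cball open_ball)
  ultimately have "E = sphere 0 1" by (intro minimal_on_sphereD[OF T(1)])
  show ?thesis
  proof
    fix y :: 'a assume "y \<in> sphere 0 (norm x)"
    then have "y /\<^sub>R r \<in> E" using \<open>r > 0\<close> \<open>E = sphere 0 1\<close> by (simp add: r_def)
    then obtain z where "z \<in> F" "y /\<^sub>R r = z /\<^sub>R r" by (auto simp: E_def)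
    then show "y \<in> F" using \<open>r > 0\<close> by simp
  qed
qed (use \<open>x \<in> F\<close> in simp)

lemma union_spheres_if_minimal_on_sphere:
  fixes F :: "'a::real_normed_vector set"
  assumes "minimal_on_sphere T" "\<forall>f\<in>T. \<forall>x. norm (f x) = norm x"
      "\<forall>f\<in>T. \<forall>c x. f (c *\<^sub>R x) = c *\<^sub>R f x"
    and "closed F" "\<forall>f\<in>T. f ` F = F"
  shows "F = (\<Union>r\<in>norm ` F. sphere 0 r)"
proof
  show "F \<subseteq> (\<Union>r\<in>norm ` F. sphere 0 r)" by (auto intro: UN_I)
  show "(\<Union>r\<in>norm ` F. sphere 0 r) \<subseteq> F"
    using sphere_subset_if_minimal_on_sphere[OF assms] by blast
qed

lemma cball_if_minimal_on_sphere:
  fixes K :: "'a::euclidean_space set"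
  assumes "minimal_on_sphere T" "\<forall>f\<in>T. \<forall>x. norm (f x) = norm x"
      "\<forall>f\<in>T. \<forall>c x. f (c *\<^sub>R x) = c *\<^sub>R f x"
    and K: "convex_body K" "\<forall>f\<in>T. f ` K = K"
  obtains r where "r > 0" "K = cball 0 r"
proof -
  have K': "compact K" "convex K" "interior K \<noteq> {}" using K(1) by (auto simp: convex_body_def)
  then have "K \<noteq> {}" by auto
  then obtain x where x: "x \<in> K" "\<And>y. y \<in> K \<Longrightarrow> norm y \<le> norm x"
    using continuous_attains_sup[OF K'(1) _ continuous_on_norm_id] by blast
  define r where "r = norm x"
  have "K \<subseteq> cball 0 r" using x by (auto simp: r_def)
  moreover have "r > 0"
  proof (rule ccontr)
    assume "\<not> r > 0"
    then have "K \<subseteq> {0}" using \<open>K \<subseteq> cball 0 r\<close> by (auto simp: r_def)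
    then show False using K'(3) interior_mono[of K "{0}"] by auto
  qed
  moreover have "cball 0 r \<subseteq> K"
  proof -
    have "sphere 0 r \<subseteq> K"
      unfolding r_def
      by (rule sphere_subset_if_minimal_on_sphere[OF assms(1-3) compact_imp_closed[OF K'(1)] K(2) x(1)])
    then have "convex hull (frontier (cball 0 r)) \<subseteq> K" using K'(2) by (simp add: hull_minimal)
    then show ?thesis using Krein_Milman_frontier[of "cball (0::'a) r"] by simp
  qed
  ultimately show ?thesis by (intro that) auto
qed

lemma minimal_on_sphere_partner_rotations:
  fixes e :: "nat \<Rightarrow> 'a::euclidean_space"
  assumes e: "bij_betw e {..<DIM('a)} Basis"
    and d: "1 \<le> d" "2 * d \<le> DIM('a)" and p: "DIM('a) \<le> p * d"
    and \<theta>: "int_independent \<theta> d" "\<theta> d = 1"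
    and J: "\<And>j. 1 \<le> j \<Longrightarrow> j \<le> p \<Longrightarrow> (j = p \<Longrightarrow> 2 \<le> d) \<Longrightarrow> j \<in> J"
  shows "minimal_on_sphere ((\<lambda>j. multi_rot e (e \<circ> partner DIM('a) d p j) d (\<lambda>l. 2 * pi * \<theta> l)) ` J)"
proof (rule minimal_on_sphereI)
  fix E :: "'a set"
  assume E: "E \<subseteq> sphere 0 1" "E \<noteq> {}" "closed E"
    and inv: "\<And>f. f \<in> (\<lambda>j. multi_rot e (e \<circ> partner DIM('a) d p j) d (\<lambda>l. 2 * pi * \<theta> l)) ` J \<Longrightarrow> f ` E = E"
  let ?R = "\<lambda>i i'. rot_edge E (e i) (e i')"
  have edge: "?R l (partner DIM('a) d p j l) \<and> ?R (partner DIM('a) d p j l) l"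
    if "1 \<le> j" "j \<le> p" "j = p \<Longrightarrow> 2 \<le> d" "l < d" for j l
  proof -
    have "rot_invariant E (e l) (e (partner DIM('a) d p j l))"
      using rot_invariant_if_multi_rot_invariant[OF orthonormal_planes_partner[OF e d] E(3)
          inv[OF imageI[OF J]] \<theta>] that
      by simp
    moreover have "l < DIM('a)" "partner DIM('a) d p j l < DIM('a)" "partner DIM('a) d p j l \<noteq> l"
      using partner_bounds[OF d \<open>l < d\<close>, of p j] d \<open>l < d\<close> by auto
    then have "e l \<noteq> e (partner DIM('a) d p j l)" "e l \<in> Basis" "e (partner DIM('a) d p j l) \<in> Basis"
      using e by (auto simp: bij_betw_def inj_on_def)
    ultimately show ?thesis by (auto simp: rot_edge_def rot_invariant_swap)
  qed
  have "1 \<le> p" using two_le_if_mult_bounds[of d "DIM('a)" p] d p by simp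
  then have path: "?R\<^sup>*\<^sup>* 0 w" if "w < DIM('a)" for w
    using d p edge that by (intro partner_connected[of d "DIM('a)" p]) auto
  have "(rot_edge E)\<^sup>*\<^sup>* (e 0) (e w)" if "w < DIM('a)" for w
    using path[OF that] by (induction rule: rtranclp_induct) (auto intro: rtranclp.rtrancl_into_rtrancl)
  moreover have "e 0 \<in> Basis" and "Basis = e ` {..<DIM('a)}"
    using e d by (auto simp: bij_betw_def)
  moreover have "2 \<le> DIM('a)" using d by simp
  ultimately show "E = sphere 0 1"
    using sphere_eq_if_rot_edges_connected[OF E(1,2)] by (metis imageE lessThan_iff)
qed

lemma le_nat_ceiling_divide_mult: "0 < d \<Longrightarrow> n \<le> nat \<lceil>real n / real d\<rceil> * d"
proof -
  assume "0 < d"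
  have "real n / real d \<le> real (nat \<lceil>real n / real d\<rceil>)" by (rule real_nat_ceiling_ge)
  then have "real n \<le> real (nat \<lceil>real n / real d\<rceil>) * real d"
    using \<open>0 < d\<close> by (simp only: pos_divide_le_eq of_nat_0_less_iff)
  then show ?thesis by (simp only: of_nat_mult[symmetric] of_nat_le_iff)
qed

lemma exists_subspaces_refl_products:
  fixes a :: "nat \<Rightarrow> 'a::euclidean_space" and b :: "nat \<Rightarrow> nat \<Rightarrow> 'a"
  assumes planes: "\<And>j. orthonormal_planes a (b j) d"
  shows "\<exists>G :: nat \<Rightarrow> 'a set. (\<forall>j. subspace (G j) \<and> dim (G j) = d) \<and>
           (\<forall>j>0. refl_sub (G 0) \<circ> refl_sub (G j) = multi_rot a (b j) d (\<lambda>l. 2 * pi * \<theta> l))"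
proof -
  define \<alpha> where "\<alpha> l = - (pi * \<theta> l)" for l
  define G where "G j = (if j = 0 then span (a ` {..<d})
      else span ((\<lambda>l. cos (\<alpha> l) *\<^sub>R a l + sin (\<alpha> l) *\<^sub>R b j l) ` {..<d}))" for j
  have "subspace (G j) \<and> dim (G j) = d" for j
  proof (cases "j = 0")
    case True
    then show ?thesis using dim_span_orthonormal[of a d] planes[of 0]
      by (simp add: G_def orthonormal_planes_def)
  next
    case False
    then show ?thesis using dim_span_orthonormal[OF orthonormal_upto_twist[OF planes[of j], of \<alpha>]]
      by (simp add: G_def)
  qed
  moreover have "refl_sub (G 0) \<circ> refl_sub (G j) = multi_rot a (b j) d (\<lambda>l. 2 * pi * \<theta> l)"
    if "j > 0" for j
  proof
    fix x
    show "(refl_sub (G 0) \<circ> refl_sub (G j)) x = multi_rot a (b j) d (\<lambda>l. 2 * pi * \<theta> l) x"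
      using refl_sub_span_twist_comp[OF planes[of j], of \<alpha> x] that
      by (simp add: G_def \<alpha>_def mult.assoc)
  qed
  ultimately show ?thesis by (intro exI[of _ G]) simp
qed

lemma exists_subspaces_minimal_products:
  assumes d: "1 \<le> d" "2 * d \<le> DIM('a::euclidean_space)"
  defines "m \<equiv> if d = 1 then DIM('a) - 1 else nat \<lceil>real DIM('a) / real d\<rceil>"
  shows "\<exists>G :: nat \<Rightarrow> 'a set. (\<forall>j\<le>m. subspace (G j) \<and> dim (G j) = d) \<and>
           minimal_on_sphere ((\<lambda>j. refl_sub (G 0) \<circ> refl_sub (G j)) ` {1..m})"
proof -
  define p where "p = nat \<lceil>real DIM('a) / real d\<rceil>"
  have p: "DIM('a) \<le> p * d" using le_nat_ceiling_divide_mult[of d "DIM('a)"] d by (simp add: p_def)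
  obtain e :: "nat \<Rightarrow> 'a" where e: "bij_betw e {..<DIM('a)} Basis"
    using ex_bij_betw_nat_finite[of "Basis :: 'a set"] by (auto simp: atLeast0LessThan)
  obtain \<theta> where \<theta>: "\<theta> d = 1" "int_independent \<theta> d"
    using exists_int_independent by blast
  let ?rot = "\<lambda>j. multi_rot e (e \<circ> partner DIM('a) d p j) d (\<lambda>l. 2 * pi * \<theta> l)"
  obtain G :: "nat \<Rightarrow> 'a set" where G: "\<forall>j. subspace (G j) \<and> dim (G j) = d"
    and prod: "\<forall>j>0. refl_sub (G 0) \<circ> refl_sub (G j) = ?rot j"
    using exists_subspaces_refl_products[where a = e and b = "\<lambda>j. e \<circ> partner DIM('a) d p j"
        and \<theta> = \<theta>, OF orthonormal_planes_partner[OF e d]] by blast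
  have "(\<lambda>j. refl_sub (G 0) \<circ> refl_sub (G j)) ` {1..m} = ?rot ` {1..m}"
    using prod by (intro image_cong) auto
  moreover have "minimal_on_sphere (?rot ` {1..m})"
  proof (rule minimal_on_sphere_partner_rotations[OF e d p \<theta>(2,1)])
    fix j assume j: "1 \<le> j" "j \<le> p" "j = p \<Longrightarrow> 2 \<le> d"
    show "j \<in> {1..m}"
    proof (cases "d = 1")
      case True
      then have "j \<noteq> p" "p = DIM('a)" using j(3) by (auto simp: p_def)
      then show ?thesis using j(1,2) True by (simp add: m_def)
    qed (use j in \<open>simp add: m_def p_def\<close>)
  qed
  ultimately show ?thesis using G by (intro exI[of _ G]) simp
qed

lemma num_refl_eq:
  assumes "2 \<le> n" "1 \<le> i" "i \<le> n - 1"
  shows "num_refl n i = Suc (if min i (n - i) = 1 then n - 1 else nat \<lceil>real n / real (min i (n - i))\<rceil>)"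
  using assms by (auto simp: num_refl_def min_def)

lemma exists_subspaces_minimal_reflections:
  assumes "2 \<le> DIM('a::euclidean_space)" "1 \<le> i" "i \<le> DIM('a) - 1"
  shows "\<exists>H :: nat \<Rightarrow> 'a set. (\<forall>j\<in>{1..num_refl DIM('a) i}. subspace (H j) \<and> dim (H j) = i) \<and>
           minimal_on_sphere ((\<lambda>j. refl_sub (H j)) ` {1..num_refl DIM('a) i})"
proof -
  define n d k where "n = DIM('a)" and "d = min i (n - i)" and "k = num_refl n i"
  have d: "1 \<le> d" "2 * d \<le> DIM('a)" using assms by (auto simp: d_def n_def)
  have km: "k - 1 = (if d = 1 then DIM('a) - 1 else nat \<lceil>real DIM('a) / real d\<rceil>)"
    using num_refl_eq[of n i] assms by (simp add: k_def d_def n_def)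
  obtain G :: "nat \<Rightarrow> 'a set" where G: "\<forall>j\<le>k - 1. subspace (G j) \<and> dim (G j) = d"
    and min: "minimal_on_sphere ((\<lambda>j. refl_sub (G 0) \<circ> refl_sub (G j)) ` {1..k - 1})"
    using exists_subspaces_minimal_products[OF d] unfolding km[symmetric] by blast
  define H where "H j = (if 2 * i \<le> n then G (j - 1) else (G (j - 1))\<^sup>\<bottom>)" for j
  have H: "subspace (H j) \<and> dim (H j) = i" if "j \<in> {1..k}" for j
  proof -
    have "subspace (G (j - 1))" "dim (G (j - 1)) = d" using G that by auto
    then show ?thesis using assms
      by (auto simp: H_def d_def n_def subspace_orthogonal_comp dim_orthogonal_comp)
  qed
  have "minimal_on_sphere ((\<lambda>j. refl_sub (H j)) ` {1..k})"
  proof (rule minimal_on_sphere_if_compositions[OF min])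
    fix f assume "f \<in> (\<lambda>j. refl_sub (G 0) \<circ> refl_sub (G j)) ` {1..k - 1}"
    then obtain j where j: "j \<in> {1..k - 1}" "f = refl_sub (G 0) \<circ> refl_sub (G j)" by blast
    moreover have "subspace (G 0)" "subspace (G j)" using G j(1) by auto
    ultimately have "f = refl_sub (H 1) \<circ> refl_sub (H (Suc j))"
      by (auto simp: H_def refl_sub_orthogonal_comp_comp)
    then show "\<exists>g\<in>(\<lambda>j. refl_sub (H j)) ` {1..k}. \<exists>h\<in>(\<lambda>j. refl_sub (H j)) ` {1..k}. f = g \<circ> h"
      using j(1) by (intro bexI[of _ "refl_sub (H 1)"] bexI[of _ "refl_sub (H (Suc j))"]) auto
  qed
  with H show ?thesis unfolding k_def n_def by blast
qed

theorem corollary3p9: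
  fixes i :: nat
  assumes "DIM('a::euclidean_space) \<ge> 2"
    and "1 \<le> i" and "i \<le> DIM('a) - 1"
  shows "\<exists>H :: nat \<Rightarrow> 'a set.
     (\<forall>j\<in>{1..num_refl DIM('a) i}. subspace (H j) \<and> dim (H j) = i) \<and>
     (\<forall>E. E \<subseteq> sphere 0 1 \<and> E \<noteq> {} \<and> closed E \<and>
          (\<forall>j\<in>{1..num_refl DIM('a) i}. refl_sub (H j) ` E = E)
          \<longrightarrow> E = sphere 0 1) \<and>
     (\<forall>F. closed F \<and> (\<forall>j\<in>{1..num_refl DIM('a) i}. refl_sub (H j) ` F = F)
          \<longrightarrow> (\<exists>R::real set. F = (\<Union>r\<in>R. sphere 0 r))) \<and>
     (\<forall>K. convex_body K \<and> (\<forall>j\<in>{1..num_refl DIM('a) i}. refl_sub (H j) ` K = K)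
          \<longrightarrow> (\<exists>r>0. K = cball 0 r))"
proof -
  let ?J = "{1..num_refl DIM('a) i}"
  obtain H :: "nat \<Rightarrow> 'a set" where H: "\<forall>j\<in>?J. subspace (H j) \<and> dim (H j) = i"
    and min: "minimal_on_sphere ((\<lambda>j. refl_sub (H j)) ` ?J)"
    using exists_subspaces_minimal_reflections[OF assms] by blast
  have iso: "\<forall>f\<in>(\<lambda>j. refl_sub (H j)) ` ?J. \<forall>x. norm (f x) = norm x"
    and hom: "\<forall>f\<in>(\<lambda>j. refl_sub (H j)) ` ?J. \<forall>c x. f (c *\<^sub>R x) = c *\<^sub>R f x"
    using H by (auto simp: norm_refl_sub refl_sub_scaleR)
  have inv: "\<forall>f\<in>(\<lambda>j. refl_sub (H j)) ` ?J. f ` S = S" if "\<forall>j\<in>?J. refl_sub (H j) ` S = S" for S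
    using that by auto
  show ?thesis
  proof (intro exI[of _ H] conjI allI impI)
    fix E assume "E \<subseteq> sphere 0 1 \<and> E \<noteq> {} \<and> closed E \<and> (\<forall>j\<in>?J. refl_sub (H j) ` E = E)"
    then show "E = sphere 0 1" using inv[of E] by (intro minimal_on_sphereD[OF min]) auto
  next
    fix F assume "closed F \<and> (\<forall>j\<in>?J. refl_sub (H j) ` F = F)"
    then have "F = (\<Union>r\<in>norm ` F. sphere 0 r)"
      using inv[of F] by (intro union_spheres_if_minimal_on_sphere[OF min iso hom]) auto
    then show "\<exists>R. F = (\<Union>r\<in>R. sphere 0 r)" ..
  next
    fix K assume "convex_body K \<and> (\<forall>j\<in>?J. refl_sub (H j) ` K = K)"
    then obtain r where "r > 0" "K = cball 0 r"
      using inv[of K] by (elim conjE cball_if_minimal_on_sphere[OF min iso hom]) auto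
    then show "\<exists>r>0. K = cball 0 r" by blast
  qed (use H in blast)
qed

end
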